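(* Let $\mathcal G=(N,\Sigma,S,P)$ be a normalized spine grammar with spine direction $d$. Then $\pi(\mathcal F(\mathcal S(\mathcal G))_S)=T(\mathcal G)$, where $\pi$ is the relabeling with $\pi(\alpha_n)=\alpha$ and $\pi\bigl(\tfrac{\sigma}{n_1\ n_2}\bigr)=\sigma$ for all $\alpha\in\Sigma_0$, $\sigma\in\Sigma_2$, $n,n_1,n_2\in N$.
   Context: sCFTG/spine grammar: $\mathcal G=(N,\Sigma,S,P)$, $N=N_0\cup N_1$ (nullary/unary nonterminals), terminals $\Sigma=\Sigma_0\cup\Sigma_2$, $S\in N_0$; productions rewrite nullary nonterminals to trees and unary nonterminals to contexts (trees with one hole $\Box$); $T(\mathcal G)$ is the set of terminal trees derivable from $S$. Spine direction $d:\Sigma_2\to\{1,2\}$: in every production for a unary nonterminal, the path from the root to $\Box$ passes from each $\sigma\in\Sigma_2$ on it into child $d(\sigma)$. Normalized: every production is of the form $n\to\alpha$ or $n\to b(\alpha)$ ($n\in N_0$, $b\in N_1$, $\alpha\in\Sigma_0$), $n\to b_1(b_2(\Box))$ ($b_1,b_2\in N_1$), or $n\to\sigma(\Box,a)$ / $n\to\sigma(a,\Box)$ ($\sigma\in\Sigma_2$, $a\in N_0\setminus\{S\}$); and for each $n\in N_0$ no tree derivable from $n$ by one step followed by steps using only productions for unary nonterminals contains $n$. Notation: $n_g=(n,g)\in N^2$, $\alpha_n=(\alpha,n)\in\Sigma_0\times N$, $\frac{\sigma}{n_1\ n_2}=(\sigma,n_1,n_2)\in\Sigma_2\times N^2$.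 Spines: $\mathcal S(\mathcal G)=L(\mathcal G')$ for the CFG $\mathcal G'$ with nonterminals $\{\top\}\cup N^2$ ($\top\notin N$), start $\top$, terminals $(\Sigma_0\times N)\cup(\Sigma_2\times N^2)$ and productions: $\top\to\alpha_n$ for each $(n\to\alpha)\in P$; $\top\to\alpha_n\,b_n$ for each $(n\to b(\alpha))\in P$; for all $g\in N$: $n_g\to b'_g\,b_g$ for each $(n\to b(b'(\Box)))\in P$; $n_g\to\frac{\sigma}{g\ n'}$ for each $(n\to\sigma(\Box,n'))\in P$; $n_g\to\frac{\sigma}{n'\ g}$ for each $(n\to\sigma(n',\Box))\in P$. Reassembly: let $\mathrm{gen}(\alpha_n)=n$ and $\mathrm{gen}(\frac{\sigma}{n_1\ n_2})=n_{d(\sigma)}$. For a set $T$ of trees with binary symbols in $\Sigma_2\times N^2$ and leaves in $\Sigma_0\times N$, let $T_n=\{t\in T\mid\mathrm{gen}(\text{root label of }t)=n\}$. For $w\in(\Sigma_0\times N)(\Sigma_2\times N^2)^*$ define $\mathrm{attach}_T(\alpha_n)=\{\alpha_n\}$ and $\mathrm{attach}_T(w\frac{\sigma}{n_1\ n_2})=\{\frac{\sigma}{n_1\ n_2}(t_1,t_2)\mid t_{d(\sigma)}\in\mathrm{attach}_T(w),\ t_{3-d(\sigma)}\in T_{n_{3-d(\sigma)}}\}$. For a language $L\subseteq(\Sigma_0\times N)(\Sigma_2\times N^2)^*$, $\mathcal F(L)$ is the smallest tree language $\mathcal F$ with $\mathrm{attach}_{\mathcal F}(w)\subseteq\mathcal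 F$ for all $w\in L$, and $\mathcal F(L)_S=\{t\in\mathcal F(L)\mid\mathrm{gen}(\text{root label of }t)=S\}$. *)

theory Defs
  imports Main
begin

text \<open>Right-hand sides / sentential forms: trees over terminals, nonterminals and the hole.\<close>
datatype ('n,'t) rtree = Hole | Term 't "('n,'t) rtree list" | NT 'n "('n,'t) rtree list"

datatype ('a,'b) btree = Lf 'a | Br 'b "('a,'b) btree" "('a,'b) btree"

record ('n,'t) scftg =
  N0 :: "'n set"
  N1 :: "'n set"
  Sig0 :: "'t set"
  Sig2 :: "'t set"
  start :: 'n
  prods :: "('n \<times> ('n,'t) rtree) set"

definition NN :: "('n,'t) scftg \<Rightarrow> 'n set" where
  "NN G = N0 G \<union> N1 G"

fun holes :: "('n,'t) rtree \<Rightarrow> nat" where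
  "holes Hole = 1"
| "holes (Term f ts) = sum_list (map holes ts)"
| "holes (NT m ts) = sum_list (map holes ts)"

fun nts :: "('n,'t) rtree \<Rightarrow> 'n set" where
  "nts Hole = {}"
| "nts (Term f ts) = \<Union> (set (map nts ts))"
| "nts (NT m ts) = insert m (\<Union> (set (map nts ts)))"

fun wellranked :: "('n,'t) scftg \<Rightarrow> ('n,'t) rtree \<Rightarrow> bool" where
  "wellranked G Hole = True"
| "wellranked G (Term f ts) =
     (((f \<in> Sig0 G \<and> ts = []) \<or> (f \<in> Sig2 G \<and> length ts = 2)) \<and> (\<forall>t \<in> set ts. wellranked G t))"
| "wellranked G (NT m ts) =
     (((m \<in> N0 G \<and> ts = []) \<or> (m \<in> N1 G \<and> length ts = 1)) \<and> (\<forall>t \<in> set ts. wellranked G t))"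

definition wf_scftg :: "('n,'t) scftg \<Rightarrow> bool" where
  "wf_scftg G \<longleftrightarrow>
     finite (N0 G) \<and> finite (N1 G) \<and> finite (Sig0 G) \<and> finite (Sig2 G) \<and> finite (prods G) \<and>
     N0 G \<inter> N1 G = {} \<and> Sig0 G \<inter> Sig2 G = {} \<and> start G \<in> N0 G \<and>
     (\<forall>(n, r) \<in> prods G. n \<in> NN G \<and> wellranked G r \<and>
        (n \<in> N0 G \<longrightarrow> holes r = 0) \<and> (n \<in> N1 G \<longrightarrow> holes r = 1))"

fun subst_hole :: "('n,'t) rtree \<Rightarrow> ('n,'t) rtree \<Rightarrow> ('n,'t) rtree" where
  "subst_hole Hole u = u"
| "subst_hole (Term f ts) u = Term f (map (\<lambda>t. subst_hole t u) ts)"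
| "subst_hole (NT m ts) u = NT m (map (\<lambda>t. subst_hole t u) ts)"

inductive dstep :: "('n,'t) scftg \<Rightarrow> ('n \<times> ('n,'t) rtree) set \<Rightarrow> ('n,'t) rtree \<Rightarrow> ('n,'t) rtree \<Rightarrow> bool"
  for G Ps where
  apply0: "(n, r) \<in> Ps \<Longrightarrow> n \<in> N0 G \<Longrightarrow> dstep G Ps (NT n []) r"
| apply1: "(n, r) \<in> Ps \<Longrightarrow> n \<in> N1 G \<Longrightarrow> dstep G Ps (NT n [u]) (subst_hole r u)"
| congT: "dstep G Ps t t' \<Longrightarrow> dstep G Ps (Term f (xs @ t # ys)) (Term f (xs @ t' # ys))"
| congN: "dstep G Ps t t' \<Longrightarrow> dstep G Ps (NT m (xs @ t # ys)) (NT m (xs @ t' # ys))"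

fun embed :: "('t,'t) btree \<Rightarrow> ('n,'t) rtree" where
  "embed (Lf a) = Term a []"
| "embed (Br s l r) = Term s [embed l, embed r]"

definition tree_lang :: "('n,'t) scftg \<Rightarrow> ('t,'t) btree set" where
  "tree_lang G = {t. (dstep G (prods G))\<^sup>*\<^sup>* (NT (start G) []) (embed t)}"

fun spine_ok :: "('t \<Rightarrow> nat) \<Rightarrow> ('n,'t) rtree \<Rightarrow> bool" where
  "spine_ok d Hole = True"
| "spine_ok d (Term f [t1, t2]) =
     ((d f = 1 \<and> holes t1 > 0 \<and> spine_ok d t1) \<or> (d f = 2 \<and> holes t2 > 0 \<and> spine_ok d t2))"
| "spine_ok d (Term f _) = False"
| "spine_ok d (NT m [t]) = spine_ok d t"
| "spine_ok d (NT m _) = False"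

definition spine_direction :: "('n,'t) scftg \<Rightarrow> ('t \<Rightarrow> nat) \<Rightarrow> bool" where
  "spine_direction G d \<longleftrightarrow>
     (\<forall>\<sigma> \<in> Sig2 G. d \<sigma> \<in> {1, 2}) \<and>
     (\<forall>(n, r) \<in> prods G. n \<in> N1 G \<longrightarrow> spine_ok d r)"

definition normalized :: "('n,'t) scftg \<Rightarrow> bool" where
  "normalized G \<longleftrightarrow>
     (\<forall>(n, r) \<in> prods G.
        (n \<in> N0 G \<and> (\<exists>\<alpha> \<in> Sig0 G. r = Term \<alpha> [])) \<or>
        (n \<in> N0 G \<and> (\<exists>b \<in> N1 G. \<exists>\<alpha> \<in> Sig0 G. r = NT b [Term \<alpha> []])) \<or>
        (n \<in> N1 G \<and> (\<exists>b1 \<in> N1 G. \<exists>b2 \<in> N1 G. r = NT b1 [NT b2 [Hole]])) \<or>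
        (n \<in> N1 G \<and> (\<exists>\<sigma> \<in> Sig2 G. \<exists>a \<in> N0 G - {start G}. r = Term \<sigma> [Hole, NT a []])) \<or>
        (n \<in> N1 G \<and> (\<exists>\<sigma> \<in> Sig2 G. \<exists>a \<in> N0 G - {start G}. r = Term \<sigma> [NT a [], Hole]))) \<and>
     (\<forall>n \<in> N0 G. \<forall>t t'. dstep G (prods G) (NT n []) t \<longrightarrow>
        (dstep G {p \<in> prods G. fst p \<in> N1 G})\<^sup>*\<^sup>* t t' \<longrightarrow> n \<notin> nts t')"

text \<open>Letters \<open>\<alpha>_n\<close> (\<open>SLeaf \<alpha> n\<close>) and \<open>\<sigma>/(n1 n2)\<close> (\<open>SBin \<sigma> n1 n2\<close>).\<close>
datatype ('n,'t) ssym = SLeaf 't 'n | SBin 't 'n 'n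

text \<open>Nonterminals of G': \<open>\<top>\<close> and pairs \<open>n_g\<close>.\<close>
datatype 'n cnt = Top | NP 'n 'n

type_synonym ('n,'t) cprod = "'n cnt \<times> ('n cnt + ('n,'t) ssym) list"

inductive_set spine_prods :: "('n,'t) scftg \<Rightarrow> ('n,'t) cprod set" for G where
  "(n, Term \<alpha> []) \<in> prods G \<Longrightarrow> (Top, [Inr (SLeaf \<alpha> n)]) \<in> spine_prods G"
| "(n, NT b [Term \<alpha> []]) \<in> prods G \<Longrightarrow> (Top, [Inr (SLeaf \<alpha> n), Inl (NP b n)]) \<in> spine_prods G"
| "(n, NT b [NT b' [Hole]]) \<in> prods G \<Longrightarrow> g \<in> NN G \<Longrightarrow>
     (NP n g, [Inl (NP b' g), Inl (NP b g)]) \<in> spine_prods G"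
| "(n, Term \<sigma> [Hole, NT n' []]) \<in> prods G \<Longrightarrow> g \<in> NN G \<Longrightarrow>
     (NP n g, [Inr (SBin \<sigma> g n')]) \<in> spine_prods G"
| "(n, Term \<sigma> [NT n' [], Hole]) \<in> prods G \<Longrightarrow> g \<in> NN G \<Longrightarrow>
     (NP n g, [Inr (SBin \<sigma> n' g)]) \<in> spine_prods G"

definition cfg_step :: "('a \<times> ('a + 'b) list) set \<Rightarrow> ('a + 'b) list \<Rightarrow> ('a + 'b) list \<Rightarrow> bool" where
  "cfg_step R u v \<longleftrightarrow> (\<exists>x y A \<alpha>. (A, \<alpha>) \<in> R \<and> u = x @ [Inl A] @ y \<and> v = x @ \<alpha> @ y)"

definition cfg_lang :: "('a \<times> ('a + 'b) list) set \<Rightarrow> 'a \<Rightarrow> 'b list set" where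
  "cfg_lang R S = {w. (cfg_step R)\<^sup>*\<^sup>* [Inl S] (map Inr w)}"

definition spines :: "('n,'t) scftg \<Rightarrow> ('n,'t) ssym list set" where
  "spines G = cfg_lang (spine_prods G) Top"

type_synonym ('n,'t) stree = "('t \<times> 'n, 't \<times> 'n \<times> 'n) btree"

fun gen_root :: "('t \<Rightarrow> nat) \<Rightarrow> ('n,'t) stree \<Rightarrow> 'n" where
  "gen_root d (Lf (\<alpha>, n)) = n"
| "gen_root d (Br (\<sigma>, n1, n2) l r) = (if d \<sigma> = 1 then n1 else n2)"

definition restr :: "('t \<Rightarrow> nat) \<Rightarrow> ('n,'t) stree set \<Rightarrow> 'n \<Rightarrow> ('n,'t) stree set" where
  "restr d T n = {t \<in> T. gen_root d t = n}"

fun att :: "('t \<Rightarrow> nat) \<Rightarrow> ('n,'t) stree set \<Rightarrow> ('n,'t) stree set \<Rightarrow> ('n,'t) ssym list \<Rightarrow> ('n,'t) stree set" where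
  "att d T A [] = A"
| "att d T A (SBin \<sigma> n1 n2 # w) =
     att d T {Br (\<sigma>, n1, n2) t1 t2 | t1 t2.
                if d \<sigma> = 1 then t1 \<in> A \<and> t2 \<in> restr d T n2
                else t2 \<in> A \<and> t1 \<in> restr d T n1} w"
| "att d T A (SLeaf \<alpha> n # w) = {}"

text \<open>\<open>attach_T(w)\<close> for \<open>w \<in> (\<Sigma>0\<times>N)(\<Sigma>2\<times>N\<^sup>2)*\<close> (empty for words not of this shape).\<close>
fun attach :: "('t \<Rightarrow> nat) \<Rightarrow> ('n,'t) stree set \<Rightarrow> ('n,'t) ssym list \<Rightarrow> ('n,'t) stree set" where
  "attach d T (SLeaf \<alpha> n # w) = att d T {Lf (\<alpha>, n)} w"
| "attach d T _ = {}"

definition forest :: "('t \<Rightarrow> nat) \<Rightarrow> ('n,'t) ssym list set \<Rightarrow> ('n,'t) stree set" where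
  "forest d L = \<Inter> {F. \<forall>w \<in> L. attach d F w \<subseteq> F}"

definition relabel :: "('n,'t) stree \<Rightarrow> ('t,'t) btree" where
  "relabel t = map_btree fst fst t"

end

theory Submission
  imports Defs
begin

text \<open>In a normalized grammar a complete derivation from a nullary nonterminal \<open>n\<close> is
  either a leaf \<open>\<alpha>\<close> or a context derived from a unary \<open>b\<close> (with \<open>n \<rightarrow> b(\<alpha>)\<close>) applied
  to \<open>\<alpha>\<close>, and the contexts of unary nonterminals are built by composition
  \<open>b1(b2(\<box>))\<close> and by the one-step contexts \<open>\<sigma>(\<box>, a)\<close>, \<open>\<sigma>(a, \<box>)\<close> whose side subtree
  is again derived from a nullary \<open>a\<close>. A word of the spine grammar records exactly the
  binary letters on the path from \<open>\<alpha>\<close> to the root, each annotated with the nonterminal of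
  its side subtree, and reassembly attaches side subtrees with the recorded generating
  nonterminals. Hence both inclusions are inductions: over complete derivations for
  \<open>T(G) \<subseteq> \<pi>(F)\<close>, and over the least fixed point \<open>F\<close> for the converse. The small-step
  derivations defining \<open>T(G)\<close> are first turned into compositional big-step ones.\<close>

lemma subst_hole_assoc: "subst_hole (subst_hole a b) c = subst_hole a (subst_hole b c)"
  by (induction a) auto

lemma subst_hole_Hole [simp]: "subst_hole a Hole = a"
  by (induction a) (auto simp: map_idI)

lemma holes_subst_hole: "holes (subst_hole a b) = holes a * holes b"
  by (induction a) (simp_all add: sum_list_mult_const o_def cong: map_cong)

lemma subst_hole_no_holes: "holes a = 0 \<Longrightarrow> subst_hole a b = a"
  by (induction a) (auto simp: map_idI)

lemma split_one_hole:
  assumes "sum_list (map holes ts) = 1"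
  obtains xs t ys where "ts = xs @ t # ys" "holes t = 1"
    "\<forall>x\<in>set xs. holes x = 0" "\<forall>x\<in>set ys. holes x = 0"
  using assms
proof (induction ts arbitrary: thesis)
  case (Cons a ts)
  show ?case
  proof (cases "holes a = 0")
    case True
    with Cons.prems(2) have "sum_list (map holes ts) = 1" by simp
    then obtain xs t ys where "ts = xs @ t # ys" "holes t = 1"
      "\<forall>x\<in>set xs. holes x = 0" "\<forall>x\<in>set ys. holes x = 0"
      using Cons.IH by blast
    with True show ?thesis using Cons.prems(1)[of "a # xs"] by simp
  next
    case False
    moreover have "holes a + sum_list (map holes ts) = 1" using Cons.prems(2) by simp
    ultimately have "holes a = 1" "sum_list (map holes ts) = 0" by arith+
    then show ?thesis using Cons.prems(1)[of "[]"] by simp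
  qed
qed simp

section \<open>Big-step derivations\<close>

lemma wf_scftg_holes_N0: "wf_scftg G \<Longrightarrow> (n, r) \<in> prods G \<Longrightarrow> n \<in> N0 G \<Longrightarrow> holes r = 0"
  unfolding wf_scftg_def by fast

lemma wf_scftg_holes_N1: "wf_scftg G \<Longrightarrow> (n, r) \<in> prods G \<Longrightarrow> n \<in> N1 G \<Longrightarrow> holes r = 1"
  unfolding wf_scftg_def by fast

text \<open>A big-step version of \<open>(dstep G (prods G))\<^sup>*\<^sup>*\<close> that expands every nonterminal
  occurrence completely. Unlike the small-step relation it is compositional, so a derivation
  of \<open>subst_hole r u\<close> can be split at the hole.\<close>
inductive expands :: "('n,'t) scftg \<Rightarrow> ('n,'t) rtree \<Rightarrow> ('n,'t) rtree \<Rightarrow> bool" for G where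
  expands_Hole: "expands G Hole Hole"
| expands_Term: "list_all2 (expands G) ts vs \<Longrightarrow> expands G (Term f ts) (Term f vs)"
| expands_NT0: "(n, r) \<in> prods G \<Longrightarrow> n \<in> N0 G \<Longrightarrow> expands G r v \<Longrightarrow> expands G (NT n []) v"
| expands_NT1: "(n, r) \<in> prods G \<Longrightarrow> n \<in> N1 G \<Longrightarrow> expands G r C \<Longrightarrow> expands G u v \<Longrightarrow>
    expands G (NT n [u]) (subst_hole C v)"

inductive_cases expands_HoleE: "expands G Hole v"
inductive_cases expands_TermE: "expands G (Term f ts) v"
inductive_cases expands_NTE: "expands G (NT m ts) v"

lemma expands_Hole_iff: "expands G Hole v \<longleftrightarrow> v = Hole"
  by (auto elim: expands_HoleE intro: expands_Hole)

lemma expands_leafD: "expands G (Term a []) v \<Longrightarrow> v = Term a []"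
  by (erule expands_TermE) simp

lemma expands_embed: "expands G (embed t) (embed t)"
  by (induction t) (auto intro: expands.intros)

lemma holes_expands:
  assumes "wf_scftg G"
  shows "expands G t v \<Longrightarrow> holes v = holes t"
proof (induction rule: expands.induct)
  case (expands_Term ts vs f)
  then have "map holes vs = map holes ts"
    by (induction rule: list_all2_induct) auto
  then show ?case by simp
next
  case (expands_NT1 n r C u v)
  then show ?case using wf_scftg_holes_N1[OF assms] by (simp add: holes_subst_hole)
qed (use wf_scftg_holes_N0[OF assms] in simp_all)

lemma list_all2_expands_no_holes:
  assumes "wf_scftg G" "list_all2 (expands G) xs vs" "\<forall>x\<in>set xs. holes x = 0"
  shows "\<forall>v\<in>set vs. holes v = 0"
  using assms(2,3) by (induction rule: list_all2_induct) (simp_all add: holes_expands[OF assms(1)])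

lemma expands_subst_holeD:
  assumes "wf_scftg G"
  shows "holes r = 1 \<Longrightarrow> expands G (subst_hole r u) v \<Longrightarrow>
    \<exists>C v'. expands G r C \<and> expands G u v' \<and> v = subst_hole C v'"
proof (induction r arbitrary: v)
  case Hole
  then show ?case by (auto intro: expands_Hole)
next
  case (Term f ts)
  obtain xs t ys where ts: "ts = xs @ t # ys" "holes t = 1"
    and no_holes: "\<forall>x\<in>set xs. holes x = 0" "\<forall>x\<in>set ys. holes x = 0"
    using split_one_hole[of ts] Term.prems(1) by auto
  have "map (\<lambda>t. subst_hole t u) ts = xs @ subst_hole t u # ys"
    using ts no_holes by (simp add: subst_hole_no_holes map_idI)
  with Term.prems(2) obtain vs1 vt vs2 where v: "v = Term f (vs1 @ vt # vs2)"
    and xs: "list_all2 (expands G) xs vs1" and ys: "list_all2 (expands G) ys vs2"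
    and vt: "expands G (subst_hole t u) vt"
    by (auto elim!: expands_TermE simp: list_all2_append1 list_all2_Cons1)
  from Term.IH[of t vt] ts vt obtain Ct v'
    where Ct: "expands G t Ct" "expands G u v'" "vt = subst_hole Ct v'"
    by auto
  have "expands G (Term f ts) (Term f (vs1 @ Ct # vs2))"
    using ts xs ys Ct by (auto intro!: expands_Term list_all2_appendI)
  moreover have "v = subst_hole (Term f (vs1 @ Ct # vs2)) v'"
    using v Ct list_all2_expands_no_holes[OF assms xs no_holes(1)]
      list_all2_expands_no_holes[OF assms ys no_holes(2)]
    by (simp add: subst_hole_no_holes map_idI)
  ultimately show ?case using Ct by blast
next
  case (NT m ts)
  from NT.prems obtain t where t: "ts = [t]" "holes t = 1"
    by (auto elim: expands_NTE)
  from NT.prems(2) t obtain r C0 v0 where m: "(m, r) \<in> prods G" "m \<in> N1 G" "expands G r C0"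
    and v0: "expands G (subst_hole t u) v0" "v = subst_hole C0 v0"
    by (auto elim: expands_NTE)
  from NT.IH[of t v0] t v0 obtain Ct v'
    where "expands G t Ct" "expands G u v'" "v0 = subst_hole Ct v'"
    by auto
  with m t v0(2) show ?case
    by (metis expands_NT1 subst_hole_assoc)
qed

lemma dstep_expands:
  assumes "wf_scftg G"
  shows "dstep G (prods G) t t' \<Longrightarrow> expands G t' v \<Longrightarrow> expands G t v"
proof (induction arbitrary: v rule: dstep.induct)
  case (apply0 n r)
  then show ?case by (rule expands_NT0)
next
  case (apply1 n r u)
  with wf_scftg_holes_N1[OF assms] expands_subst_holeD[OF assms]
  obtain C v' where "expands G r C" "expands G u v'" "v = subst_hole C v'"
    by blast
  with apply1 show ?case by (auto intro: expands_NT1)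
next
  case (congT t t' f xs ys)
  then obtain vs1 vt vs2 where "v = Term f (vs1 @ vt # vs2)" "expands G t' vt"
    "list_all2 (expands G) xs vs1" "list_all2 (expands G) ys vs2"
    by (auto elim!: expands_TermE simp: list_all2_append1 list_all2_Cons1)
  with congT.IH show ?case by (auto intro!: expands_Term list_all2_appendI)
next
  case (congN t t' m xs ys)
  then have "\<exists>u. xs @ t' # ys = [u]" by (auto elim: expands_NTE)
  then have "xs = []" "ys = []" by (auto simp: append_eq_Cons_conv)
  with congN obtain r C v' where "(m, r) \<in> prods G" "m \<in> N1 G" "expands G r C"
    "expands G t' v'" "v = subst_hole C v'"
    by (auto elim: expands_NTE)
  with congN.IH \<open>xs = []\<close> \<open>ys = []\<close> show ?case by (auto intro: expands_NT1)
qed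

lemma rtranclp_dstep_expands:
  assumes "wf_scftg G"
  shows "(dstep G (prods G))\<^sup>*\<^sup>* t t' \<Longrightarrow> expands G t' v \<Longrightarrow> expands G t v"
  by (induction rule: converse_rtranclp_induct) (auto intro: dstep_expands[OF assms])

section \<open>Derivations of normalized grammars\<close>

lemma normalized_prodE:
  assumes "normalized G" "(n, r) \<in> prods G"
  obtains (leaf) \<alpha> where "n \<in> N0 G" "r = Term \<alpha> []"
  | (unary) b \<alpha> where "n \<in> N0 G" "r = NT b [Term \<alpha> []]"
  | (compose) b1 b2 where "n \<in> N1 G" "r = NT b1 [NT b2 [Hole]]"
  | (left) \<sigma> a where "n \<in> N1 G" "a \<in> N0 G" "r = Term \<sigma> [Hole, NT a []]"
  | (right) \<sigma> a where "n \<in> N1 G" "a \<in> N0 G" "r = Term \<sigma> [NT a [], Hole]"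
  using assms unfolding normalized_def by fast

lemma normalized_N0_prodE:
  assumes "wf_scftg G" "normalized G" "(n, r) \<in> prods G" "n \<in> N0 G"
  obtains (leaf) \<alpha> where "r = Term \<alpha> []"
  | (unary) b \<alpha> where "r = NT b [Term \<alpha> []]"
  using normalized_prodE[OF assms(2,3)] wf_scftg_holes_N0[OF assms(1,3,4)] by fastforce

lemma normalized_N1_prodE:
  assumes "wf_scftg G" "normalized G" "(n, r) \<in> prods G" "n \<in> N1 G"
  obtains (compose) b1 b2 where "r = NT b1 [NT b2 [Hole]]"
  | (left) \<sigma> a where "r = Term \<sigma> [Hole, NT a []]"
  | (right) \<sigma> a where "r = Term \<sigma> [NT a [], Hole]"
  using normalized_prodE[OF assms(2,3)] wf_scftg_holes_N1[OF assms(1,3,4)] by fastforce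

lemma normalized_no_holes_N0: "normalized G \<Longrightarrow> (n, r) \<in> prods G \<Longrightarrow> holes r = 0 \<Longrightarrow> n \<in> N0 G"
  by (erule normalized_prodE) auto

lemma normalized_one_hole_N1: "normalized G \<Longrightarrow> (n, r) \<in> prods G \<Longrightarrow> holes r = 1 \<Longrightarrow> n \<in> N1 G"
  by (erule normalized_prodE) auto

lemma spine_direction_left:
  assumes "normalized G" "spine_direction G d" "(n, Term \<sigma> [Hole, NT a []]) \<in> prods G"
  shows "d \<sigma> = 1"
  using normalized_one_hole_N1[OF assms(1,3)] assms(2,3) unfolding spine_direction_def by fastforce

lemma spine_direction_right:
  assumes "normalized G" "spine_direction G d" "(n, Term \<sigma> [NT a [], Hole]) \<in> prods G"
  shows "d \<sigma> = 2"
  using normalized_one_hole_N1[OF assms(1,3)] assms(2,3) unfolding spine_direction_def by fastforce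

inductive yields_tree :: "('n,'t) scftg \<Rightarrow> 'n \<Rightarrow> ('n,'t) rtree \<Rightarrow> bool"
  and yields_ctx :: "('n,'t) scftg \<Rightarrow> 'n \<Rightarrow> ('n,'t) rtree \<Rightarrow> bool" for G where
  yields_leaf: "(n, Term \<alpha> []) \<in> prods G \<Longrightarrow> yields_tree G n (Term \<alpha> [])"
| yields_unary: "(n, NT b [Term \<alpha> []]) \<in> prods G \<Longrightarrow> yields_ctx G b C \<Longrightarrow>
    yields_tree G n (subst_hole C (Term \<alpha> []))"
| yields_compose: "(b, NT b1 [NT b2 [Hole]]) \<in> prods G \<Longrightarrow> yields_ctx G b1 C1 \<Longrightarrow> yields_ctx G b2 C2 \<Longrightarrow>
    yields_ctx G b (subst_hole C1 C2)"
| yields_left: "(b, Term \<sigma> [Hole, NT a []]) \<in> prods G \<Longrightarrow> yields_tree G a v \<Longrightarrow>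
    yields_ctx G b (Term \<sigma> [Hole, v])"
| yields_right: "(b, Term \<sigma> [NT a [], Hole]) \<in> prods G \<Longrightarrow> yields_tree G a v \<Longrightarrow>
    yields_ctx G b (Term \<sigma> [v, Hole])"

lemma holes_yields_tree: "yields_tree G n v \<Longrightarrow> holes v = 0"
  by (induction rule: yields_tree_yields_ctx.inducts(1)[where ?P2.0 = "\<lambda>_ _. True"])
    (simp_all add: holes_subst_hole)

lemma rtranclp_dstep_NT:
  "(dstep G Ps)\<^sup>*\<^sup>* t t' \<Longrightarrow> (dstep G Ps)\<^sup>*\<^sup>* (NT m [t]) (NT m [t'])"
  by (induction rule: rtranclp_induct)
    (auto intro: rtranclp.rtrancl_into_rtrancl
      dstep.congN[where xs = "[]" and ys = "[]", simplified])

lemma rtranclp_dstep_Term: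
  "(dstep G Ps)\<^sup>*\<^sup>* t t' \<Longrightarrow> (dstep G Ps)\<^sup>*\<^sup>* (Term f (xs @ t # ys)) (Term f (xs @ t' # ys))"
  by (induction rule: rtranclp_induct) (auto intro: rtranclp.rtrancl_into_rtrancl dstep.congT)

lemma dstep_apply1:
  "normalized G \<Longrightarrow> (n, r) \<in> prods G \<Longrightarrow> holes r = 1 \<Longrightarrow> dstep G (prods G) (NT n [u]) (subst_hole r u)"
  by (blast intro: dstep.apply1 normalized_one_hole_N1)

lemma yields_imp_rtranclp_dstep:
  assumes "normalized G"
  shows "yields_tree G n v \<Longrightarrow> (dstep G (prods G))\<^sup>*\<^sup>* (NT n []) v"
    and "yields_ctx G b C \<Longrightarrow> (dstep G (prods G))\<^sup>*\<^sup>* (NT b [u]) (subst_hole C u)"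
proof (induction arbitrary: and u rule: yields_tree_yields_ctx.inducts)
  case (yields_leaf n \<alpha>)
  then have "dstep G (prods G) (NT n []) (Term \<alpha> [])"
    using normalized_no_holes_N0[OF assms] by (simp add: dstep.apply0)
  then show ?case by (rule r_into_rtranclp)
next
  case (yields_unary n b \<alpha> C)
  then have "dstep G (prods G) (NT n []) (NT b [Term \<alpha> []])"
    using normalized_no_holes_N0[OF assms] by (simp add: dstep.apply0)
  then show ?case using yields_unary(3) by (rule converse_rtranclp_into_rtranclp)
next
  case (yields_compose b b1 b2 C1 C2)
  have "dstep G (prods G) (NT b [u]) (NT b1 [NT b2 [u]])"
    using dstep_apply1[OF assms yields_compose(1)] by simp
  also have "(dstep G (prods G))\<^sup>*\<^sup>* \<dots> (NT b1 [subst_hole C2 u])"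
    using yields_compose(5) by (rule rtranclp_dstep_NT)
  also have "(dstep G (prods G))\<^sup>*\<^sup>* \<dots> (subst_hole C1 (subst_hole C2 u))"
    by (rule yields_compose(3))
  finally show ?case by (simp add: subst_hole_assoc)
next
  case (yields_left b \<sigma> a v)
  have "dstep G (prods G) (NT b [u]) (Term \<sigma> ([u] @ NT a [] # []))"
    using dstep_apply1[OF assms yields_left(1)] by simp
  also have "(dstep G (prods G))\<^sup>*\<^sup>* \<dots> (Term \<sigma> ([u] @ v # []))"
    using yields_left(3) by (rule rtranclp_dstep_Term)
  finally show ?case
    using holes_yields_tree[OF yields_left(2)] by (simp add: subst_hole_no_holes)
next
  case (yields_right b \<sigma> a v)
  have "dstep G (prods G) (NT b [u]) (Term \<sigma> ([] @ NT a [] # [u]))"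
    using dstep_apply1[OF assms yields_right(1)] by simp
  also have "(dstep G (prods G))\<^sup>*\<^sup>* \<dots> (Term \<sigma> ([] @ v # [u]))"
    using yields_right(3) by (rule rtranclp_dstep_Term)
  finally show ?case
    using holes_yields_tree[OF yields_right(2)] by (simp add: subst_hole_no_holes)
qed

text \<open>The invariant also speaks about right-hand sides of productions, because
  \<^const>\<open>expands\<close> recurses into them.\<close>
lemma expands_imp_yields:
  assumes wf: "wf_scftg G" and nm: "normalized G"
  shows "expands G t v \<Longrightarrow>
    (\<forall>n. t = NT n [] \<longrightarrow> yields_tree G n v) \<and>
    (\<forall>b u. t = NT b [u] \<longrightarrow> (\<exists>C v'. yields_ctx G b C \<and> expands G u v' \<and> v = subst_hole C v')) \<and>
    (\<forall>n. (n, t) \<in> prods G \<longrightarrow> n \<in> N0 G \<longrightarrow> yields_tree G n v) \<and>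
    (\<forall>n. (n, t) \<in> prods G \<longrightarrow> n \<in> N1 G \<longrightarrow> yields_ctx G n v)"
proof (induction rule: expands.induct)
  case (expands_Term ts vs f)
  have "yields_tree G n (Term f vs)" if "(n, Term f ts) \<in> prods G" "n \<in> N0 G" for n
    using expands_Term.IH that(1)
    by (cases rule: normalized_N0_prodE[OF wf nm that]) (auto intro: yields_leaf)
  moreover have "yields_ctx G n (Term f vs)" if "(n, Term f ts) \<in> prods G" "n \<in> N1 G" for n
    using expands_Term.IH that(1)
    by (cases rule: normalized_N1_prodE[OF wf nm that])
      (auto simp: list_all2_Cons1 expands_Hole_iff intro: yields_left yields_right)
  ultimately show ?case by blast
next
  case (expands_NT1 n r C u v)
  then have C: "yields_ctx G n C" by blast
  have "yields_tree G m (subst_hole C v)" if "(m, NT n [u]) \<in> prods G" "m \<in> N0 G" for m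
    using expands_NT1.hyps(4) C that(1)
    by (cases rule: normalized_N0_prodE[OF wf nm that])
      (auto dest: expands_leafD intro: yields_unary)
  moreover have "yields_ctx G m (subst_hole C v)" if "(m, NT n [u]) \<in> prods G" "m \<in> N1 G" for m
    using expands_NT1.IH(2) C that(1)
    by (cases rule: normalized_N1_prodE[OF wf nm that])
      (auto simp: expands_Hole_iff intro: yields_compose)
  ultimately show ?case using C expands_NT1.hyps(4) by blast
qed (auto elim: normalized_N0_prodE[OF wf nm] normalized_N1_prodE[OF wf nm])

lemma tree_lang_eq:
  assumes "wf_scftg G" "normalized G"
  shows "tree_lang G = {t. yields_tree G (start G) (embed t)}"
proof (intro set_eqI iffI)
  fix t assume "t \<in> tree_lang G"
  then have "expands G (NT (start G) []) (embed t)"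
    unfolding tree_lang_def by (blast intro: rtranclp_dstep_expands[OF assms(1)] expands_embed)
  then show "t \<in> {t. yields_tree G (start G) (embed t)}"
    using expands_imp_yields[OF assms] by blast
qed (simp add: tree_lang_def yields_imp_rtranclp_dstep(1)[OF assms(2)])

section \<open>Derivation trees of context-free grammars\<close>

definition derives_sym :: "('a \<Rightarrow> 'b list \<Rightarrow> bool) \<Rightarrow> 'a + 'b \<Rightarrow> 'b list \<Rightarrow> bool" where
  "derives_sym P a u \<longleftrightarrow> (case a of Inl B \<Rightarrow> P B u | Inr x \<Rightarrow> u = [x])"

lemma derives_sym_mono [mono]: "(\<And>B u. P B u \<longrightarrow> Q B u) \<Longrightarrow> derives_sym P a u \<longrightarrow> derives_sym Q a u"
  unfolding derives_sym_def by (cases a) auto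

lemma derives_sym_simps [simp]:
  "derives_sym P (Inl B) u \<longleftrightarrow> P B u"
  "derives_sym P (Inr x) u \<longleftrightarrow> u = [x]"
  by (simp_all add: derives_sym_def)

inductive cfg_derives :: "('a \<times> ('a + 'b) list) set \<Rightarrow> 'a \<Rightarrow> 'b list \<Rightarrow> bool" for R where
  cfg_derivesI: "(A, \<beta>) \<in> R \<Longrightarrow> list_all2 (derives_sym (cfg_derives R)) \<beta> us \<Longrightarrow>
    cfg_derives R A (concat us)"

definition cfg_derives_form :: "('a \<times> ('a + 'b) list) set \<Rightarrow> ('a + 'b) list \<Rightarrow> 'b list \<Rightarrow> bool" where
  "cfg_derives_form R \<alpha> w \<longleftrightarrow> (\<exists>us. w = concat us \<and> list_all2 (derives_sym (cfg_derives R)) \<alpha> us)"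

lemma cfg_derives_form_terminals: "cfg_derives_form R (map Inr w) w"
proof -
  have "list_all2 (derives_sym (cfg_derives R)) (map Inr w) (map (\<lambda>x. [x]) w)"
    by (induction w) simp_all
  moreover have "concat (map (\<lambda>x. [x]) w) = w" by simp
  ultimately show ?thesis unfolding cfg_derives_form_def by metis
qed

lemma cfg_derives_form_step:
  assumes "cfg_step R \<alpha> \<beta>" "cfg_derives_form R \<beta> w"
  shows "cfg_derives_form R \<alpha> w"
proof -
  obtain x y A \<gamma> us where step: "(A, \<gamma>) \<in> R" "\<alpha> = x @ [Inl A] @ y" "\<beta> = x @ \<gamma> @ y"
    and w: "w = concat us" "list_all2 (derives_sym (cfg_derives R)) (x @ \<gamma> @ y) us"
    using assms unfolding cfg_step_def cfg_derives_form_def by blast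
  then obtain us1 us2 us3 where us: "us = us1 @ us2 @ us3"
    "list_all2 (derives_sym (cfg_derives R)) x us1"
    "list_all2 (derives_sym (cfg_derives R)) \<gamma> us2"
    "list_all2 (derives_sym (cfg_derives R)) y us3"
    by (auto simp: list_all2_append1)
  have "cfg_derives R A (concat us2)"
    using step(1) us(3) by (rule cfg_derivesI)
  then have "list_all2 (derives_sym (cfg_derives R)) \<alpha> (us1 @ [concat us2] @ us3)"
    using us step(2) by (auto intro: list_all2_appendI)
  moreover have "w = concat (us1 @ [concat us2] @ us3)" using us w by simp
  ultimately show ?thesis unfolding cfg_derives_form_def by blast
qed

lemma cfg_step_lift: "cfg_step R \<alpha> \<beta> \<Longrightarrow> cfg_step R (x @ \<alpha> @ y) (x @ \<beta> @ y)"
  unfolding cfg_step_def by (metis append.assoc)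

lemma rtranclp_cfg_step_lift:
  "(cfg_step R)\<^sup>*\<^sup>* \<alpha> \<beta> \<Longrightarrow> (cfg_step R)\<^sup>*\<^sup>* (x @ \<alpha> @ y) (x @ \<beta> @ y)"
  by (induction rule: rtranclp_induct) (auto intro: rtranclp.rtrancl_into_rtrancl cfg_step_lift)

lemma cfg_derives_imp_rtranclp_cfg_step:
  "cfg_derives R A w \<Longrightarrow> (cfg_step R)\<^sup>*\<^sup>* [Inl A] (map Inr w)"
proof (induction rule: cfg_derives.induct)
  case (cfg_derivesI A \<beta> us)
  have "cfg_step R [Inl A] \<beta>"
    unfolding cfg_step_def using cfg_derivesI(1) by force
  moreover from cfg_derivesI(2) have "(cfg_step R)\<^sup>*\<^sup>* \<beta> (map Inr (concat us))"
  proof (induction rule: list_all2_induct)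
    case (Cons a \<beta> u us)
    have "(cfg_step R)\<^sup>*\<^sup>* [a] (map Inr u)"
      using Cons(1) by (cases a) (auto simp: derives_sym_def)
    then have "(cfg_step R)\<^sup>*\<^sup>* ([] @ [a] @ \<beta>) ([] @ map Inr u @ \<beta>)"
      by (rule rtranclp_cfg_step_lift)
    moreover have "(cfg_step R)\<^sup>*\<^sup>* (map Inr u @ \<beta> @ []) (map Inr u @ map Inr (concat us) @ [])"
      using Cons(3) by (rule rtranclp_cfg_step_lift)
    ultimately show ?case by simp
  qed simp
  ultimately show ?case by (rule converse_rtranclp_into_rtranclp)
qed

lemma mem_cfg_lang_iff: "w \<in> cfg_lang R A \<longleftrightarrow> cfg_derives R A w"
proof
  assume "w \<in> cfg_lang R A"
  then have "(cfg_step R)\<^sup>*\<^sup>* [Inl A] (map Inr w)" by (simp add: cfg_lang_def)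
  then have "cfg_derives_form R [Inl A] w"
    by (induction rule: converse_rtranclp_induct)
      (auto intro: cfg_derives_form_terminals cfg_derives_form_step)
  then show "cfg_derives R A w"
    unfolding cfg_derives_form_def by (auto simp: list_all2_Cons1)
qed (simp add: cfg_lang_def cfg_derives_imp_rtranclp_cfg_step)

lemma cfg_derives_terminal: "(A, [Inr x]) \<in> R \<Longrightarrow> cfg_derives R A [x]"
  using cfg_derivesI[of A "[Inr x]" R "[[x]]"] by simp

lemma cfg_derives_terminal_nonterminal:
  "(A, [Inr x, Inl B]) \<in> R \<Longrightarrow> cfg_derives R B w \<Longrightarrow> cfg_derives R A (x # w)"
  using cfg_derivesI[of A "[Inr x, Inl B]" R "[[x], w]"] by simp

lemma cfg_derives_nonterminals:
  "(A, [Inl B, Inl C]) \<in> R \<Longrightarrow> cfg_derives R B u \<Longrightarrow> cfg_derives R C v \<Longrightarrow> cfg_derives R A (u @ v)"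
  using cfg_derivesI[of A "[Inl B, Inl C]" R "[u, v]"] by simp

section \<open>Reassembly\<close>

lemma att_empty [simp]: "att d T {} w = {}"
proof (induction w)
  case (Cons x w)
  then show ?case by (cases x) simp_all
qed simp

lemma att_append: "att d T A (u @ v) = att d T (att d T A u) v"
proof (induction u arbitrary: A)
  case (Cons x u)
  then show ?case by (cases x) simp_all
qed simp

lemma att_mono: "A \<subseteq> A' \<Longrightarrow> T \<subseteq> T' \<Longrightarrow> att d T A w \<subseteq> att d T' A' w"
proof (induction w arbitrary: A A')
  case (Cons x w)
  show ?case
  proof (cases x)
    case (SBin \<sigma> n1 n2)
    have "restr d T n \<subseteq> restr d T' n" for n
      using Cons.prems(2) unfolding restr_def by blast
    with Cons.prems(1) have
      "{Br (\<sigma>, n1, n2) t1 t2 | t1 t2.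
          if d \<sigma> = 1 then t1 \<in> A \<and> t2 \<in> restr d T n2 else t2 \<in> A \<and> t1 \<in> restr d T n1}
       \<subseteq> {Br (\<sigma>, n1, n2) t1 t2 | t1 t2.
          if d \<sigma> = 1 then t1 \<in> A' \<and> t2 \<in> restr d T' n2 else t2 \<in> A' \<and> t1 \<in> restr d T' n1}"
      by (auto split: if_splits) blast+
    with SBin Cons.IH Cons.prems(2) show ?thesis by simp
  qed simp
qed simp

lemma attach_mono: "T \<subseteq> T' \<Longrightarrow> attach d T w \<subseteq> attach d T' w"
  by (induction d T w rule: attach.induct) (simp_all add: att_mono)

lemma forest_least: "(\<And>w. w \<in> L \<Longrightarrow> attach d P w \<subseteq> P) \<Longrightarrow> forest d L \<subseteq> P"
  unfolding forest_def by blast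

lemma forest_closed:
  assumes "w \<in> L" shows "attach d (forest d L) w \<subseteq> forest d L"
proof -
  have "attach d (forest d L) w \<subseteq> F" if "\<forall>w\<in>L. attach d F w \<subseteq> F" for F
  proof -
    have "forest d L \<subseteq> F" unfolding forest_def using that by blast
    then show ?thesis using attach_mono that assms by blast
  qed
  then show ?thesis unfolding forest_def by blast
qed

lemma gen_root_att_snoc:
  assumes "s \<in> att d T A (w @ [SBin \<sigma> n1 n2])"
  shows "gen_root d s = (if d \<sigma> = 1 then n1 else n2)"
proof -
  from assms obtain t1 t2 where "s = Br (\<sigma>, n1, n2) t1 t2"
    by (auto simp: att_append)
  then show ?thesis by simp
qed

lemma relabel_simps [simp]:
  "relabel (Lf (\<alpha>, n)) = Lf \<alpha>"
  "relabel (Br (\<sigma>, n1, n2) l r) = Br \<sigma> (relabel l) (relabel r)"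
  by (simp_all add: relabel_def)

lemma holes_embed [simp]: "holes (embed t) = 0"
  by (induction t) simp_all

lemma inj_embed: "inj embed"
proof (rule injI)
  show "embed a = embed b \<Longrightarrow> a = b" for a b :: "('t,'t) btree"
    by (induction a arbitrary: b) (case_tac b; simp)+
qed

lemma spine_derives_induct [consumes 1, case_names compose left right]:
  assumes "cfg_derives (spine_prods G) (NP b g) w"
    and compose: "\<And>n b b' g u v. (n, NT b [NT b' [Hole]]) \<in> prods G \<Longrightarrow> g \<in> NN G \<Longrightarrow>
      cfg_derives (spine_prods G) (NP b' g) u \<Longrightarrow> P b' g u \<Longrightarrow>
      cfg_derives (spine_prods G) (NP b g) v \<Longrightarrow> P b g v \<Longrightarrow> P n g (u @ v)"
    and left: "\<And>n \<sigma> a g. (n, Term \<sigma> [Hole, NT a []]) \<in> prods G \<Longrightarrow> g \<in> NN G \<Longrightarrow>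
      P n g [SBin \<sigma> g a]"
    and right: "\<And>n \<sigma> a g. (n, Term \<sigma> [NT a [], Hole]) \<in> prods G \<Longrightarrow> g \<in> NN G \<Longrightarrow>
      P n g [SBin \<sigma> a g]"
  shows "P b g w"
proof -
  have "cfg_derives (spine_prods G) A w \<Longrightarrow> \<forall>b g. A = NP b g \<longrightarrow> P b g w" for A w
  proof (induction rule: cfg_derives.induct)
    case (cfg_derivesI A \<beta> us)
    from cfg_derivesI(1) show ?case
    proof cases
      case (3 n b b' g)
      with cfg_derivesI(2) show ?thesis
        by (auto simp: list_all2_Cons1 intro: compose)
    qed (use cfg_derivesI(2) in \<open>auto simp: list_all2_Cons1 intro: left right\<close>)
  qed
  with assms(1) show ?thesis by blast
qed

lemma spines_cases:
  assumes "w \<in> spines G"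
  obtains (leaf) n \<alpha> where "(n, Term \<alpha> []) \<in> prods G" "w = [SLeaf \<alpha> n]"
  | (unary) n b \<alpha> w' where "(n, NT b [Term \<alpha> []]) \<in> prods G" "w = SLeaf \<alpha> n # w'"
      "cfg_derives (spine_prods G) (NP b n) w'"
proof -
  from assms obtain \<beta> us where "(Top, \<beta>) \<in> spine_prods G" "w = concat us"
    "list_all2 (derives_sym (cfg_derives (spine_prods G))) \<beta> us"
    unfolding spines_def mem_cfg_lang_iff by (auto elim: cfg_derives.cases)
  from this(1) show ?thesis
    by cases (use that \<open>w = concat us\<close> \<open>list_all2 _ \<beta> us\<close> in \<open>auto simp: list_all2_Cons1\<close>)
qed

lemma spine_derives_snoc:
  assumes "normalized G" "spine_direction G d" "cfg_derives (spine_prods G) (NP b g) w"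
  shows "\<exists>w' \<sigma> n1 n2. w = w' @ [SBin \<sigma> n1 n2] \<and> (if d \<sigma> = 1 then n1 else n2) = g"
  using assms(3)
proof (induction rule: spine_derives_induct)
  case (compose n b b' g u v)
  then show ?case by (metis append.assoc)
next
  case (left n \<sigma> a g)
  then show ?case using spine_direction_left[OF assms(1,2)] by fastforce
next
  case (right n \<sigma> a g)
  then show ?case using spine_direction_right[OF assms(1,2)] by fastforce
qed

lemma gen_root_spine_att:
  assumes "normalized G" "spine_direction G d" "cfg_derives (spine_prods G) (NP b g) w"
    and "s \<in> att d T A w"
  shows "gen_root d s = g"
  using spine_derives_snoc[OF assms(1-3)] assms(4) gen_root_att_snoc by metis

section \<open>Spines and complete derivations\<close>

definition att_realizes ::
    "('t \<Rightarrow> nat) \<Rightarrow> ('n,'t) stree set \<Rightarrow> ('n,'t) ssym list \<Rightarrow> ('m,'t) rtree \<Rightarrow> bool" where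
  "att_realizes d T w C \<longleftrightarrow>
     (\<forall>x. \<exists>s\<in>att d T {x} w. embed (relabel s) = subst_hole C (embed (relabel x)))"

lemma att_realizes_append:
  assumes "att_realizes d T u C2" "att_realizes d T v C1"
  shows "att_realizes d T (u @ v) (subst_hole C1 C2)"
  unfolding att_realizes_def
proof
  fix x
  obtain y where y: "y \<in> att d T {x} u" "embed (relabel y) = subst_hole C2 (embed (relabel x))"
    using assms(1) unfolding att_realizes_def by blast
  obtain s where s: "s \<in> att d T {y} v" "embed (relabel s) = subst_hole C1 (embed (relabel y))"
    using assms(2) unfolding att_realizes_def by blast
  have "s \<in> att d T {x} (u @ v)"
    using att_mono[of "{y}" "att d T {x} u" T T d v] y(1) s(1) by (auto simp: att_append)
  moreover have "embed (relabel s) = subst_hole (subst_hole C1 C2) (embed (relabel x))"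
    using s(2) y(2) by (simp add: subst_hole_assoc)
  ultimately show
    "\<exists>s\<in>att d T {x} (u @ v). embed (relabel s) = subst_hole (subst_hole C1 C2) (embed (relabel x))"
    by blast
qed

lemma att_realizes_left:
  "d \<sigma> = 1 \<Longrightarrow> t \<in> restr d T a \<Longrightarrow>
    att_realizes d T [SBin \<sigma> g a] (Term \<sigma> [Hole, embed (relabel t)])"
  unfolding att_realizes_def by (auto simp: subst_hole_no_holes)

lemma att_realizes_right:
  "d \<sigma> \<noteq> 1 \<Longrightarrow> t \<in> restr d T a \<Longrightarrow>
    att_realizes d T [SBin \<sigma> a g] (Term \<sigma> [embed (relabel t), Hole])"
  unfolding att_realizes_def by (auto simp: subst_hole_no_holes)

lemma yields_imp_forest:
  assumes nm: "normalized G" and sd: "spine_direction G d"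
  shows "yields_tree G n v \<Longrightarrow> \<exists>s\<in>restr d (forest d (spines G)) n. embed (relabel s) = v"
    and "yields_ctx G b C \<Longrightarrow> g \<in> NN G \<Longrightarrow>
      \<exists>w. cfg_derives (spine_prods G) (NP b g) w \<and> att_realizes d (forest d (spines G)) w C"
proof (induction arbitrary: and g rule: yields_tree_yields_ctx.inducts)
  case (yields_leaf n \<alpha>)
  then have "[SLeaf \<alpha> n] \<in> spines G"
    unfolding spines_def mem_cfg_lang_iff by (intro cfg_derives_terminal spine_prods.intros(1))
  then have "Lf (\<alpha>, n) \<in> forest d (spines G)"
    using forest_closed by fastforce
  then show ?case by (force simp: restr_def)
next
  case (yields_unary n b \<alpha> C)
  then have "n \<in> NN G" using normalized_no_holes_N0[OF nm] unfolding NN_def by auto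
  with yields_unary(3) obtain w where w: "cfg_derives (spine_prods G) (NP b n) w"
    and realizes: "att_realizes d (forest d (spines G)) w C"
    by blast
  from realizes obtain s where s: "s \<in> att d (forest d (spines G)) {Lf (\<alpha>, n)} w"
    "embed (relabel s) = subst_hole C (Term \<alpha> [])"
    unfolding att_realizes_def by fastforce
  have "SLeaf \<alpha> n # w \<in> spines G"
    unfolding spines_def mem_cfg_lang_iff
    using spine_prods.intros(2)[OF yields_unary(1)] w by (rule cfg_derives_terminal_nonterminal)
  then have "s \<in> forest d (spines G)" using forest_closed s(1) by fastforce
  moreover have "gen_root d s = n" using gen_root_spine_att[OF nm sd w s(1)] .
  ultimately show ?case using s(2) by (auto simp: restr_def)
next
  case (yields_compose b b1 b2 C1 C2)
  obtain w1 w2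
    where "cfg_derives (spine_prods G) (NP b1 g) w1" "att_realizes d (forest d (spines G)) w1 C1"
      and "cfg_derives (spine_prods G) (NP b2 g) w2" "att_realizes d (forest d (spines G)) w2 C2"
    using yields_compose(3,5) yields_compose.prems by blast
  then show ?case
    using spine_prods.intros(3)[OF yields_compose(1) yields_compose.prems]
    by (blast intro: cfg_derives_nonterminals att_realizes_append)
next
  case (yields_left b \<sigma> a v)
  then obtain t where "t \<in> restr d (forest d (spines G)) a" "embed (relabel t) = v" by blast
  then show ?case
    using spine_direction_left[OF nm sd yields_left(1)]
      cfg_derives_terminal[OF spine_prods.intros(4)[OF yields_left(1) yields_left.prems]]
    by (blast dest: att_realizes_left)
next
  case (yields_right b \<sigma> a v)
  then obtain t where "t \<in> restr d (forest d (spines G)) a" "embed (relabel t) = v" by blast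
  moreover have "d \<sigma> \<noteq> 1" using spine_direction_right[OF nm sd yields_right(1)] by simp
  ultimately show ?case
    using cfg_derives_terminal[OF spine_prods.intros(5)[OF yields_right(1) yields_right.prems]]
    by (blast dest: att_realizes_right)
qed

lemma spine_att_imp_yields_ctx:
  assumes nm: "normalized G" and sd: "spine_direction G d"
    and P: "\<forall>t\<in>P. yields_tree G (gen_root d t) (embed (relabel t))"
    and w: "cfg_derives (spine_prods G) (NP b g) w"
  shows "s \<in> att d P A w \<Longrightarrow>
    \<exists>x\<in>A. \<exists>C. yields_ctx G b C \<and> embed (relabel s) = subst_hole C (embed (relabel x))"
  using w
proof (induction b g w arbitrary: A s rule: spine_derives_induct)
  case (compose n b b' g u v)
  from compose.prems have "s \<in> att d P (att d P A u) v" by (simp add: att_append)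
  with compose.IH(2) obtain y C1 where y: "y \<in> att d P A u" "yields_ctx G b C1"
    "embed (relabel s) = subst_hole C1 (embed (relabel y))"
    by blast
  with compose.IH(1) obtain x C2 where x: "x \<in> A" "yields_ctx G b' C2"
    "embed (relabel y) = subst_hole C2 (embed (relabel x))"
    by blast
  have "yields_ctx G n (subst_hole C1 C2)"
    using compose(1) y(2) x(2) by (rule yields_compose)
  moreover have "embed (relabel s) = subst_hole (subst_hole C1 C2) (embed (relabel x))"
    using x(3) y(3) by (simp add: subst_hole_assoc)
  ultimately show ?case using x(1) by blast
next
  case (left n \<sigma> a g)
  with spine_direction_left[OF nm sd] obtain t1 t2 where
    t: "s = Br (\<sigma>, g, a) t1 t2" "t1 \<in> A" "t2 \<in> P" "gen_root d t2 = a"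
    by (fastforce simp: restr_def)
  with P left(1) have "yields_ctx G n (Term \<sigma> [Hole, embed (relabel t2)])"
    by (auto intro: yields_left)
  moreover have
    "embed (relabel s) = subst_hole (Term \<sigma> [Hole, embed (relabel t2)]) (embed (relabel t1))"
    using t(1) by (simp add: subst_hole_no_holes)
  ultimately show ?case using t(2) by blast
next
  case (right n \<sigma> a g)
  with spine_direction_right[OF nm sd] obtain t1 t2 where
    t: "s = Br (\<sigma>, a, g) t1 t2" "t2 \<in> A" "t1 \<in> P" "gen_root d t1 = a"
    by (fastforce simp: restr_def)
  with P right(1) have "yields_ctx G n (Term \<sigma> [embed (relabel t1), Hole])"
    by (auto intro: yields_right)
  moreover have
    "embed (relabel s) = subst_hole (Term \<sigma> [embed (relabel t1), Hole]) (embed (relabel t2))"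
    using t(1) by (simp add: subst_hole_no_holes)
  ultimately show ?case using t(2) by blast
qed

lemma forest_imp_yields_tree:
  assumes nm: "normalized G" and sd: "spine_direction G d"
    and s: "s \<in> forest d (spines G)"
  shows "yields_tree G (gen_root d s) (embed (relabel s))"
proof -
  let ?P = "{t. yields_tree G (gen_root d t) (embed (relabel t))}"
  have "attach d ?P w \<subseteq> ?P" if "w \<in> spines G" for w
    using that
  proof (cases rule: spines_cases)
    case (leaf n \<alpha>)
    then show ?thesis by (auto intro: yields_leaf)
  next
    case (unary n b \<alpha> w')
    show ?thesis
    proof
      fix t assume "t \<in> attach d ?P w"
      with unary have t: "t \<in> att d ?P {Lf (\<alpha>, n)} w'" by simp
      from spine_att_imp_yields_ctx[OF nm sd _ unary(3) t] obtain C
        where "yields_ctx G b C" "embed (relabel t) = subst_hole C (Term \<alpha> [])"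
        by auto
      moreover have "gen_root d t = n" using gen_root_spine_att[OF nm sd unary(3) t] .
      ultimately show "t \<in> ?P" using unary(1) by (auto intro: yields_unary)
    qed
  qed
  then have "forest d (spines G) \<subseteq> ?P" by (rule forest_least)
  with s show ?thesis by blast
qed

lemma relabel_restr_forest_eq:
  fixes G :: "('n,'t) scftg"
  assumes "normalized G" "spine_direction G d"
  shows "relabel ` restr d (forest d (spines G)) n = {t. yields_tree G n (embed t)}"
proof
  show "relabel ` restr d (forest d (spines G)) n \<subseteq> {t. yields_tree G n (embed t)}"
    using forest_imp_yields_tree[OF assms] by (auto simp: restr_def)
  show "{t. yields_tree G n (embed t)} \<subseteq> relabel ` restr d (forest d (spines G)) n"
  proof
    fix t assume "t \<in> {t. yields_tree G n (embed t)}"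
    then obtain s where "s \<in> restr d (forest d (spines G)) n"
      and "embed (relabel s) = (embed t :: ('n,'t) rtree)"
      using yields_imp_forest(1)[OF assms] by blast
    with inj_embed show "t \<in> relabel ` restr d (forest d (spines G)) n"
      by (metis image_eqI injD)
  qed
qed

theorem theorem6p6:
  fixes G :: "('n,'t) scftg" and d :: "'t \<Rightarrow> nat"
  assumes "wf_scftg G" and "normalized G" and "spine_direction G d"
  shows "relabel ` restr d (forest d (spines G)) (start G) = tree_lang G"
  using relabel_restr_forest_eq[OF assms(2,3)] tree_lang_eq[OF assms(1,2)] by simp

end
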